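(* Let $q\ge1$, $\lambda$ a primitive $q$th root of unity, $g(z)=\lambda z+O(z^2)$ holomorphic near $0$ with $f:=g^{\circ q}$ of the form $f(z)=z+z^{q+1}+bz^{2q+1}+O(z^{2q+2})$, and $0<r_0<1$ such that $f$ is univalent in a neighborhood of $\overline{\mathbb D}(0,r_0)$, $0$ is its only fixed point in $\overline{\mathbb D}(0,r_0)$ and $\operatorname{Re}(f')>0$ there. Let $g_n(z)=\lambda_nz+O(z^2)$, $|\lambda_n|\ne1$, with $f_n:=g_n^{\circ q}$ holomorphic near $\overline{\mathbb D}(0,r_0)$ and $f_n\to f$ uniformly on $\overline{\mathbb D}(0,r_0)$; for large $n$ the fixed points of $f_n$ in $\overline{\mathbb D}(0,r_0)$ are $0$ and the points of a $q$-cycle $\mathscr O_n$ of $g_n$. Let $0<r_1<r_0/2$ be such that $\overline{\mathbb D}(0,r_1)$ is mapped univalently into $\mathbb D(0,r_0)$ by $f$ and $f^{-1}$ and $\sup_{|z|\le r_1}|f_n(z)-z|\le r_1/2$ for all large $n$. Then there is $0<r_2<r_1$ such that for every $0<r<r_2$ and all sufficiently large $n$ the following holds. Let $z_j:=f_n^{-j}(z_0)$, $0\le j<k\le\infty$, be a (finite or infinite) backward orbit in $\mathbb D(0,r)\setminus(\{0\}\cup\mathscr O_n)$, and let $\eta_j$ be curves in $\mathbb D(0,r)\setminus(\{0\}\cup\mathscr O_n)$ joining $z_{j-1}$ to $z_j$ with $f_n^{-1}(\eta_{j-1})=\eta_j$ for every $2\le j<k$. If $\eta_1$ and $[z_0,z_1]$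 are homotopic in $\mathbb D(0,r)\setminus(\{0\}\cup\mathscr O_n)$, then so are $\eta_j$ and $[z_{j-1},z_j]$ for every $1\le j<k$.
   Context: $f_n^{-1}$ denotes the inverse of the univalent map $f_n$ near $0$. Homotopies are with fixed endpoints. *)

theory Defs
  imports "HOL-Complex_Analysis.Complex_Analysis" "HOL-Library.Landau_Symbols" "HOL-Library.Extended_Nat"
begin

definition primitive_root_of_unity :: "nat \<Rightarrow> complex \<Rightarrow> bool" where
  "primitive_root_of_unity q lam \<longleftrightarrow> lam ^ q = 1 \<and> (\<forall>m. 0 < m \<and> m < q \<longrightarrow> lam ^ m \<noteq> 1)"

definition is_q_cycle :: "(complex \<Rightarrow> complex) \<Rightarrow> nat \<Rightarrow> complex set \<Rightarrow> bool" where
  "is_q_cycle h q C \<longleftrightarrow>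
     (\<exists>w. C = (\<lambda>j. (h ^^ j) w) ` {..<q} \<and> card C = q \<and> (h ^^ q) w = w)"

end

theory Submission
  imports Defs
begin

(* For large n the fixed points P = {0} u O_n of F = f_n lie in a small disc D(0,r).
   Dividing F - id by the product of the (z - p), p in P, and applying the maximum principle
   on a fixed circle shows that on a disc D(0,R) with R >= 4r the map F - id is 1/2-Lipschitz
   and |F z - z| <= |z - p| / 10 for every p in P.  Hence F has a continuous inverse branch G
   on D(0,r), and the straight-line homotopy between G o [z_(j-1), z_j] and [z_j, z_(j+1)]
   avoids P.  Applying G to a homotopy from eta_j to [z_(j-1), z_j] therefore gives a homotopy
   from eta_(j+1) = G o eta_j to [z_j, z_(j+1)] in the complement of P, which a radial
   retraction pushes into D(0,r) - P; induction on j finishes the proof. *)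

lemma holomorphic_factor_prod_zeros:
  fixes h :: "complex \<Rightarrow> complex"
  assumes "finite Z" "h holomorphic_on S" "open S" "Z \<subseteq> S" "\<And>a. a \<in> Z \<Longrightarrow> h a = 0"
  obtains \<phi> where "\<phi> holomorphic_on S" "\<And>x. x \<in> S \<Longrightarrow> h x = \<phi> x * (\<Prod>a\<in>Z. x - a)"
proof -
  have "\<exists>\<phi>. \<phi> holomorphic_on S \<and> (\<forall>x\<in>S. h x = \<phi> x * (\<Prod>a\<in>Z. x - a))"
    using assms(1,4,5)
  proof (induction Z rule: finite_induct)
    case empty
    then show ?case using assms(2) by auto
  next
    case (insert a Z)
    then obtain \<phi> where \<phi>: "\<phi> holomorphic_on S" "\<forall>x\<in>S. h x = \<phi> x * (\<Prod>a\<in>Z. x - a)"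
      by auto
    have aS: "a \<in> S" using insert by auto
    have "(\<Prod>b\<in>Z. a - b) \<noteq> 0" using insert(1,2) by auto
    then have \<phi>a: "\<phi> a = 0" using \<phi> aS insert.prems by auto
    define \<psi> where "\<psi> = (\<lambda>z. if z = a then deriv \<phi> a else (\<phi> z - \<phi> a) / (z - a))"
    have "\<psi> holomorphic_on S" unfolding \<psi>_def
      by (rule pole_lemma[OF \<phi>(1)]) (simp add: aS assms(3) interior_open)
    moreover have "h x = \<psi> x * (\<Prod>b\<in>insert a Z. x - b)" if "x \<in> S" for x
    proof -
      have "\<phi> x = \<psi> x * (x - a)" using \<phi>a by (simp add: \<psi>_def)
      then show ?thesis using \<phi>(2) that insert(1,2) by (simp add: mult_ac)
    qed
    ultimately show ?case by blast
  qed
  then show ?thesis using that by blast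
qed

text \<open>Maximum principle for h divided by the product of the (x - a), a \<in> P; on the circle
  this product is at least (\<rho>/2) ^ card P.\<close>

lemma holomorphic_norm_le_prod_dist_zeros:
  fixes h :: "complex \<Rightarrow> complex"
  assumes hol: "h holomorphic_on ball 0 r0" and P: "finite P" "P \<subseteq> ball 0 (\<rho> / 2)"
    and zeros: "\<And>a. a \<in> P \<Longrightarrow> h a = 0" and \<rho>: "0 < \<rho>" "\<rho> < r0" and "0 \<le> M"
    and sphere: "\<And>w. w \<in> sphere 0 \<rho> \<Longrightarrow> norm (h w) \<le> M * (\<rho> / 2) ^ card P"
    and x: "x \<in> cball 0 \<rho>"
  shows "norm (h x) \<le> M * (\<Prod>a\<in>P. norm (x - a))"
proof -
  have cball_sub: "cball 0 \<rho> \<subseteq> ball 0 r0" using \<rho> by auto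
  moreover have "P \<subseteq> ball 0 r0" using P(2) \<rho> by auto
  ultimately obtain \<phi> where \<phi>: "\<phi> holomorphic_on ball 0 r0"
    and h_eq: "\<And>x. x \<in> ball 0 r0 \<Longrightarrow> h x = \<phi> x * (\<Prod>a\<in>P. x - a)"
    using holomorphic_factor_prod_zeros[OF P(1) hol open_ball _ zeros] by metis
  have norm_h: "norm (h x) = norm (\<phi> x) * (\<Prod>a\<in>P. norm (x - a))" if "x \<in> cball 0 \<rho>" for x
    using h_eq[OF subsetD[OF cball_sub that]] by (simp add: norm_mult prod_norm)
  have "norm (\<phi> x) \<le> M"
  proof (rule maximum_modulus_frontier[of \<phi> "cball 0 \<rho>"])
    show "\<phi> holomorphic_on interior (cball 0 \<rho>)"
      using holomorphic_on_subset[OF \<phi> subset_ball[of \<rho> r0]] \<rho> by simp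
    show "continuous_on (closure (cball 0 \<rho>)) \<phi>"
      using holomorphic_on_imp_continuous_on holomorphic_on_subset[OF \<phi> cball_sub] by simp
    fix w :: complex assume "w \<in> frontier (cball 0 \<rho>)"
    then have w: "norm w = \<rho>" using \<rho> by simp
    have "(\<Prod>a\<in>P. \<rho> / 2) \<le> (\<Prod>a\<in>P. norm (w - a))"
    proof (rule prod_mono)
      fix a assume "a \<in> P"
      then show "0 \<le> \<rho> / 2 \<and> \<rho> / 2 \<le> norm (w - a)"
        using P(2) w \<rho> norm_triangle_ineq2[of w a] by auto
    qed
    then have lower: "(\<rho> / 2) ^ card P \<le> (\<Prod>a\<in>P. norm (w - a))" by simp
    have "norm (\<phi> w) * (\<Prod>a\<in>P. norm (w - a)) \<le> M * (\<rho> / 2) ^ card P"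
      using sphere[of w] norm_h[of w] w by simp
    also have "\<dots> \<le> M * (\<Prod>a\<in>P. norm (w - a))"
      using lower \<open>0 \<le> M\<close> by (rule mult_left_mono)
    finally show "norm (\<phi> w) \<le> M"
      using lower \<rho> by (meson mult_right_le_imp_le zero_less_power half_gt_zero less_le_trans)
  qed (use x in auto)
  then show ?thesis
    using norm_h[OF x] by (simp add: mult_right_mono prod_nonneg)
qed

lemma prod_norm_diff_le_power:
  fixes x :: "'a::real_normed_vector"
  assumes "Q \<subseteq> ball 0 R" "norm x + R \<le> C"
  shows "(\<Prod>a\<in>Q. norm (x - a)) \<le> C ^ card Q"
proof -
  have "(\<Prod>a\<in>Q. norm (x - a)) \<le> (\<Prod>a\<in>Q. C)"
  proof (rule prod_mono)
    fix a assume "a \<in> Q"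
    then show "0 \<le> norm (x - a) \<and> norm (x - a) \<le> C"
      using assms norm_triangle_ineq4[of x a] by auto
  qed
  then show ?thesis by simp
qed

lemma prod_bound_norm_le_dist:
  fixes h :: "complex \<Rightarrow> complex"
  assumes bound: "\<And>x. x \<in> cball 0 (2 * R) \<Longrightarrow> norm (h x) \<le> M * (\<Prod>a\<in>P. norm (x - a))"
    and P: "finite P" "2 \<le> card P" "P \<subseteq> ball 0 R" and "0 \<le> M" "20 * (M + 1) * R \<le> 1"
    and x: "x \<in> ball 0 R" and p: "p \<in> P"
  shows "norm (h x) \<le> norm (x - p) / 10"
proof -
  have "0 < R" using x norm_ge_zero[of x] by (simp del: norm_ge_zero)
  then have "0 \<le> M * R" "20 * (M * R) + 20 * R \<le> 1"
    using \<open>0 \<le> M\<close> \<open>20 * (M + 1) * R \<le> 1\<close> by (simp_all add: algebra_simps)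
  then have "0 \<le> 20 * M * R" "20 * M * R \<le> 1" "2 * R \<le> 1" using \<open>0 < R\<close> by linarith+
  have "1 \<le> card (P - {p})" using P(1,2) p by simp
  have "(\<Prod>a\<in>P - {p}. norm (x - a)) \<le> (2 * R) ^ card (P - {p})"
    using P(3) x by (intro prod_norm_diff_le_power) auto
  also have "\<dots> \<le> 2 * R"
    using power_decreasing[OF \<open>1 \<le> card (P - {p})\<close>, of "2 * R"] \<open>0 < R\<close> \<open>2 * R \<le> 1\<close> by simp
  finally have "(\<Prod>a\<in>P. norm (x - a)) \<le> norm (x - p) * (2 * R)"
    unfolding prod.remove[OF P(1) p] by (simp add: mult_left_mono)
  then have "M * (\<Prod>a\<in>P. norm (x - a)) \<le> M * (norm (x - p) * (2 * R))"
    using \<open>0 \<le> M\<close> by (rule mult_left_mono)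
  moreover have "norm (h x) \<le> M * (\<Prod>a\<in>P. norm (x - a))" using x \<open>0 < R\<close> by (intro bound) simp
  ultimately have "norm (h x) \<le> M * (norm (x - p) * (2 * R))" by linarith
  also have "\<dots> = (20 * M * R) * norm (x - p) / 10" by (simp add: algebra_simps)
  also have "\<dots> \<le> norm (x - p) / 10"
    using \<open>0 \<le> 20 * M * R\<close> \<open>20 * M * R \<le> 1\<close> by (intro divide_right_mono mult_left_le_one_le) auto
  finally show ?thesis .
qed

lemma prod_bound_norm_deriv_le:
  fixes h :: "complex \<Rightarrow> complex"
  assumes hol: "h holomorphic_on ball 0 r0" "2 * R < r0"
    and bound: "\<And>x. x \<in> cball 0 (2 * R) \<Longrightarrow> norm (h x) \<le> M * (\<Prod>a\<in>P. norm (x - a))"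
    and P: "2 \<le> card P" "P \<subseteq> ball 0 R" and "0 \<le> M" "20 * (M + 1) * R \<le> 1"
    and x: "x \<in> ball 0 R"
  shows "norm (deriv h x) \<le> 1/2"
proof -
  have "0 < R" using x norm_ge_zero[of x] by (simp del: norm_ge_zero)
  then have "0 \<le> M * R" "20 * (M * R) + 20 * R \<le> 1"
    using \<open>0 \<le> M\<close> \<open>20 * (M + 1) * R \<le> 1\<close> by (simp_all add: algebra_simps)
  then have "20 * M * R \<le> 1" "3 * R \<le> 1" using \<open>0 < R\<close> by linarith+
  have "cball x R \<subseteq> cball 0 (2 * R)"
  proof
    fix w assume "w \<in> cball x R"
    then have "norm (w - x) \<le> R" by (simp add: dist_norm norm_minus_commute)
    then show "w \<in> cball 0 (2 * R)" using x norm_triangle_ineq[of x "w - x"] by simp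
  qed
  then have sub: "cball x R \<subseteq> ball 0 r0" using hol(2) by auto
  have "norm ((deriv ^^ 1) h x) \<le> fact 1 * (M * (3 * R) ^ card P) / R ^ 1"
  proof (rule Cauchy_inequality)
    show "h holomorphic_on ball x R"
      using holomorphic_on_subset[OF hol(1)] sub ball_subset_cball by blast
    show "continuous_on (cball x R) h"
      using holomorphic_on_imp_continuous_on[OF holomorphic_on_subset[OF hol(1) sub]] .
    fix w assume "norm (x - w) = R"
    then have "norm w \<le> 2 * R" using x norm_triangle_ineq[of "x - w" "-x"] by simp
    then have "(\<Prod>a\<in>P. norm (w - a)) \<le> (3 * R) ^ card P"
      using P(2) by (intro prod_norm_diff_le_power) auto
    then have "M * (\<Prod>a\<in>P. norm (w - a)) \<le> M * (3 * R) ^ card P"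
      using \<open>0 \<le> M\<close> by (rule mult_left_mono)
    moreover have "norm (h w) \<le> M * (\<Prod>a\<in>P. norm (w - a))"
      using \<open>norm w \<le> 2 * R\<close> by (intro bound) simp
    ultimately show "norm (h w) \<le> M * (3 * R) ^ card P" by linarith
  qed fact
  also have "\<dots> = 3 * M * (3 * R) ^ (card P - 1)"
    using \<open>0 < R\<close> P(1) by (simp add: power_eq_if)
  also have "\<dots> \<le> 3 * M * (3 * R)"
    using power_decreasing[of 1 "card P - 1" "3 * R"] P(1) \<open>0 < R\<close> \<open>3 * R \<le> 1\<close> \<open>0 \<le> M\<close>
    by (intro mult_left_mono) auto
  also have "\<dots> \<le> 1/2" using \<open>20 * M * R \<le> 1\<close> by simp
  finally show ?thesis by simp
qed

lemma holomorphic_lipschitz_on_convex: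
  fixes h :: "complex \<Rightarrow> complex"
  assumes "h holomorphic_on S" "open S" "convex S" "\<And>z. z \<in> S \<Longrightarrow> norm (deriv h z) \<le> B" "0 \<le> B"
  shows "B-lipschitz_on S h"
proof (rule lipschitz_onI)
  fix x y assume "x \<in> S" "y \<in> S"
  then have "norm (h x - h y) \<le> B * norm (x - y)"
    using assms holomorphic_derivI by (intro field_differentiable_bound[of S h "deriv h"]) auto
  then show "dist (h x) (h y) \<le> B * dist x y" by (simp add: dist_norm)
qed fact

lemma near_identity_inj_on:
  fixes F :: "'a::real_normed_vector \<Rightarrow> 'a"
  assumes "(1/2)-lipschitz_on S (\<lambda>x. F x - x)"
  shows "inj_on F S"
proof (rule inj_onI)
  fix x y assume "x \<in> S" "y \<in> S" "F x = F y"
  then have "dist x y \<le> 1/2 * dist x y"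
    using lipschitz_onD[OF assms, of x y] by (simp add: dist_norm norm_minus_commute algebra_simps)
  then show "x = y" by simp
qed

lemma near_identity_ball_subset_image:
  fixes F :: "'a::banach \<Rightarrow> 'a"
  assumes "0 < R" "F 0 = 0" and lip: "(1/2)-lipschitz_on (ball 0 R) (\<lambda>x. F x - x)"
  shows "ball 0 (R / 4) \<subseteq> F ` ball 0 R"
proof
  fix u :: 'a assume u: "u \<in> ball 0 (R / 4)"
  define S where "S = cball (0::'a) (R / 2)"
  have SR: "S \<subseteq> ball 0 R" unfolding S_def using \<open>0 < R\<close> by auto
  have lipD: "dist (F x - x) (F y - y) \<le> 1/2 * dist x y" if "x \<in> S" "y \<in> S" for x y
    using lipschitz_onD[OF lip] that SR by blast
  \<comment> \<open>a solution of F x = u is a fixed point of the contraction x \<mapsto> u - (F x - x)\<close>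
  have "\<exists>!x\<in>S. u - (F x - x) = x"
  proof (rule Banach_fix[of S "1/2"])
    show "complete S" unfolding S_def by (simp add: complete_eq_closed)
    show "S \<noteq> {}" unfolding S_def using \<open>0 < R\<close> by auto
    show "(\<lambda>x. u - (F x - x)) ` S \<subseteq> S"
    proof clarify
      fix x assume x: "x \<in> S"
      have "0 \<in> S" unfolding S_def using \<open>0 < R\<close> by simp
      then have "norm (F x - x) \<le> norm x / 2" using lipD[OF x \<open>0 \<in> S\<close>] \<open>F 0 = 0\<close> by (simp add: dist_norm)
      moreover have "norm x \<le> R / 2" "norm u < R / 4" using x u S_def by auto
      ultimately show "u - (F x - x) \<in> S"
        using norm_triangle_ineq4[of u "F x - x"] S_def by simp
    qed
    show "dist (u - (F x - x)) (u - (F y - y)) \<le> 1 / 2 * dist x y" if "x \<in> S" "y \<in> S" for x y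
    proof -
      have "dist (u - (F x - x)) (u - (F y - y)) = dist (F x - x) (F y - y)"
        by (simp add: dist_norm norm_minus_commute algebra_simps)
      with lipD[OF that] show ?thesis by simp
    qed
  qed auto
  then obtain x where "x \<in> S" "u - (F x - x) = x" by blast
  then show "u \<in> F ` ball 0 R" using SR by (intro image_eqI[of _ _ x]) (auto simp: algebra_simps)
qed

lemma near_identity_local_inverse:
  fixes F :: "'a::banach \<Rightarrow> 'a"
  assumes "0 < R" "F 0 = 0" and lip: "(1/2)-lipschitz_on (ball 0 R) (\<lambda>x. F x - x)"
    and "r \<le> R / 4"
  obtains G where "continuous_on (ball 0 r) G"
    "\<And>u. u \<in> ball 0 r \<Longrightarrow> G u \<in> ball 0 R" "\<And>u. u \<in> ball 0 r \<Longrightarrow> F (G u) = u"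
proof
  define G where "G = inv_into (ball 0 R) F"
  have img: "ball 0 r \<subseteq> F ` ball 0 R"
    using near_identity_ball_subset_image[OF assms(1-3)] \<open>r \<le> R / 4\<close> by auto
  show G: "G u \<in> ball 0 R" "F (G u) = u" if "u \<in> ball 0 r" for u
    using subsetD[OF img that] unfolding G_def by (metis inv_into_into, metis f_inv_into_f)
  have "2-lipschitz_on (ball 0 r) G"
  proof (rule lipschitz_onI)
    fix u v :: 'a assume uv: "u \<in> ball 0 r" "v \<in> ball 0 r"
    have "G u - G v = (u - v) - ((F (G u) - G u) - (F (G v) - G v))"
      using G uv by simp
    then have "norm (G u - G v) \<le> norm (u - v) + norm ((F (G u) - G u) - (F (G v) - G v))"
      by (metis norm_triangle_ineq4)
    also have "\<dots> \<le> norm (u - v) + norm (G u - G v) / 2"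
      using lipschitz_onD[OF lip G(1)[OF uv(1)] G(1)[OF uv(2)]] G uv by (simp add: dist_norm)
    finally show "dist (G u) (G v) \<le> 2 * dist u v" by (simp add: dist_norm)
  qed simp
  then show "continuous_on (ball 0 r) G" by (rule lipschitz_on_continuous_on)
qed

text \<open>With A = G ((1 - t) a + t c) for an inverse branch G of F, this says that the
  straight-line homotopy from G \<circ> linepath a c to linepath c d avoids p.\<close>

lemma notin_closed_segment_small_displacement:
  fixes F :: "'a::real_normed_vector \<Rightarrow> 'a"
  assumes Fc: "F c = a" and Fd: "F d = c" and FA: "F A = (1 - t) *\<^sub>R a + t *\<^sub>R c"
    and A: "norm (F A - A) \<le> norm (A - p) / 10"
    and c: "norm (F c - c) \<le> norm (c - p) / 10"
    and d: "norm (F d - d) \<le> norm (d - p) / 10"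
    and "d \<noteq> p" and t: "0 \<le> t" "t \<le> 1"
  shows "p \<notin> closed_segment A ((1 - t) *\<^sub>R c + t *\<^sub>R d)"
proof
  define B where "B = (1 - t) *\<^sub>R c + t *\<^sub>R d"
  assume "p \<in> closed_segment A ((1 - t) *\<^sub>R c + t *\<^sub>R d)"
  then have pB: "norm (B - p) \<le> norm (B - A)"
    using segment_bound(2) B_def by (metis norm_minus_commute)
  have dB: "d - B = - (1 - t) *\<^sub>R (F d - d)" and cB: "c - B = t *\<^sub>R (F d - d)"
    unfolding B_def Fd by (simp_all add: algebra_simps)
  have AB: "A - B = (1 - t) *\<^sub>R (F c - c) + t *\<^sub>R (F d - d) - (F A - A)"
    unfolding B_def Fc Fd FA by (simp add: algebra_simps)
  have "norm (d - B) \<le> norm (F d - d)" "norm (c - B) \<le> norm (F d - d)"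
    unfolding dB cB using t by (simp_all add: mult_left_le_one_le)
  moreover have "norm (A - B) \<le> norm (F c - c) + norm (F d - d) + norm (F A - A)"
  proof -
    have "norm (A - B) \<le> norm ((1 - t) *\<^sub>R (F c - c)) + norm (t *\<^sub>R (F d - d)) + norm (F A - A)"
      unfolding AB using norm_triangle_ineq4[of "(1 - t) *\<^sub>R (F c - c) + t *\<^sub>R (F d - d)" "F A - A"]
        norm_triangle_ineq[of "(1 - t) *\<^sub>R (F c - c)" "t *\<^sub>R (F d - d)"] by linarith
    also have "\<dots> \<le> norm (F c - c) + norm (F d - d) + norm (F A - A)"
      using t by (intro add_mono) (auto simp: mult_left_le_one_le)
    finally show ?thesis .
  qed
  moreover have "norm (d - p) \<le> norm (d - B) + norm (B - p)"
    "norm (c - p) \<le> norm (c - B) + norm (B - p)"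
    "norm (A - p) \<le> norm (A - B) + norm (B - p)"
    by (rule norm_diff_triangle_le[OF order_refl order_refl])+
  moreover have "norm (d - p) > 0" using \<open>d \<noteq> p\<close> by simp
  ultimately have "norm (A - B) < norm (B - p)"
    using A c d by linarith
  with pB show False by (simp add: norm_minus_commute)
qed

lemma compact_subset_ball_imp_subset_smaller_ball:
  fixes K :: "'a::real_normed_vector set"
  assumes "compact K" "K \<subseteq> ball 0 r" "0 < r"
  obtains s where "0 < s" "s < r" "K \<subseteq> ball 0 s"
proof (cases "K = {}")
  case True
  then show ?thesis using that[of "r / 2"] \<open>0 < r\<close> by simp
next
  case False
  then obtain m where "m \<in> K" and m: "\<forall>y\<in>K. norm y \<le> norm m"
    using continuous_attains_sup[OF \<open>compact K\<close> _ continuous_on_norm_id] by blast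
  then have "norm m < r" using assms(2) by auto
  show ?thesis
  proof (rule that[of "(norm m + r) / 2"])
    show "0 < (norm m + r) / 2" "(norm m + r) / 2 < r"
      using \<open>norm m < r\<close> norm_ge_zero[of m] by argo+
    show "K \<subseteq> ball 0 ((norm m + r) / 2)"
      using m \<open>norm m < r\<close> by fastforce
  qed
qed

lemma homotopic_paths_in_ball_diff:
  fixes P :: "'a::real_normed_vector set"
  assumes "compact P" "P \<subseteq> ball 0 r" and hom: "homotopic_paths (- P) p1 p2"
    and im1: "path_image p1 \<subseteq> ball 0 r - P" and im2: "path_image p2 \<subseteq> ball 0 r - P"
  shows "homotopic_paths (ball 0 r - P) p1 p2"
proof -
  have paths: "path p1" "path p2" using hom homotopic_paths_imp_path by blast+
  define K where "K = P \<union> path_image p1 \<union> path_image p2"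
  have "compact K" unfolding K_def using assms(1) paths by (intro compact_Un compact_path_image)
  moreover have "K \<subseteq> ball 0 r" unfolding K_def using assms(2) im1 im2 by auto
  moreover have "0 < r"
    using im1 pathstart_in_path_image[of p1] norm_ge_zero[of "pathstart p1"] by (auto simp del: norm_ge_zero)
  ultimately obtain s where s: "0 < s" "s < r" and K_s: "K \<subseteq> ball 0 s"
    by (rule compact_subset_ball_imp_subset_smaller_ball)
  \<comment> \<open>the radial retraction of the whole space onto cball 0 s, which fixes K\<close>
  define \<rho> where "\<rho> = (\<lambda>z::'a. (s / max s (norm z)) *\<^sub>R z)"
  have \<rho>_id: "\<rho> z = z" if "norm z \<le> s" for z
    using that s by (simp add: \<rho>_def max_def)
  have "continuous_on (- P) \<rho>" unfolding \<rho>_def using s by (intro continuous_intros) auto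
  moreover have "\<rho> \<in> - P \<rightarrow> ball 0 r - P"
  proof
    fix z assume z: "z \<in> - P"
    show "\<rho> z \<in> ball 0 r - P"
    proof (cases "norm z \<le> s")
      case True
      then show ?thesis using \<rho>_id z s by auto
    next
      case False
      then have "norm (\<rho> z) = s" using s by (auto simp: \<rho>_def)
      then show ?thesis using K_s s unfolding K_def by auto
    qed
  qed
  ultimately have "homotopic_paths (ball 0 r - P) (\<rho> \<circ> p1) (\<rho> \<circ> p2)"
    by (rule homotopic_paths_continuous_image[OF hom])
  moreover have "homotopic_paths (ball 0 r - P) p (\<rho> \<circ> p)"
    if "path p" "path_image p \<subseteq> ball 0 r - P" "path_image p \<subseteq> K" for p
  proof (rule homotopic_paths_eq[OF that(1,2)])
    fix t :: real assume "t \<in> {0..1}"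
    then have "p t \<in> ball 0 s" using that(3) K_s unfolding path_image_def by blast
    then show "p t = (\<rho> \<circ> p) t" by (simp add: \<rho>_id)
  qed
  then have "homotopic_paths (ball 0 r - P) p1 (\<rho> \<circ> p1)" "homotopic_paths (ball 0 r - P) p2 (\<rho> \<circ> p2)"
    using paths im1 im2 unfolding K_def by auto
  ultimately show ?thesis by (meson homotopic_paths_sym homotopic_paths_trans)
qed

definition segment_homotopy_propagates :: "(complex \<Rightarrow> complex) \<Rightarrow> complex set \<Rightarrow> bool" where
  "segment_homotopy_propagates F X \<longleftrightarrow>
    (\<forall>(k :: enat) (z :: nat \<Rightarrow> complex) (\<eta> :: nat \<Rightarrow> real \<Rightarrow> complex).
      (\<forall>j. enat j < k \<longrightarrow> z j \<in> X) \<longrightarrow>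
      (\<forall>j. 1 \<le> j \<and> enat j < k \<longrightarrow> F (z j) = z (j - 1)) \<longrightarrow>
      (\<forall>j. 1 \<le> j \<and> enat j < k \<longrightarrow>
          path (\<eta> j) \<and> pathstart (\<eta> j) = z (j - 1) \<and> pathfinish (\<eta> j) = z j \<and>
          path_image (\<eta> j) \<subseteq> X) \<longrightarrow>
      (\<forall>j. 2 \<le> j \<and> enat j < k \<longrightarrow> (\<forall>t\<in>{0..1}. F (\<eta> j t) = \<eta> (j - 1) t)) \<longrightarrow>
      (enat 1 < k \<longrightarrow> homotopic_paths X (\<eta> 1) (linepath (z 0) (z 1))) \<longrightarrow>
      (\<forall>j. 1 \<le> j \<and> enat j < k \<longrightarrow> homotopic_paths X (\<eta> j) (linepath (z (j - 1)) (z j))))"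

locale inverse_branch =
  fixes F G :: "complex \<Rightarrow> complex" and P :: "complex set" and r R :: real
  assumes compact_P: "compact P" and P_subset: "P \<subseteq> ball 0 r" and r_le_R: "r \<le> R"
    and continuous_G: "continuous_on (ball 0 r) G"
    and G_in_ball: "\<And>u. u \<in> ball 0 r \<Longrightarrow> G u \<in> ball 0 R"
    and F_G: "\<And>u. u \<in> ball 0 r \<Longrightarrow> F (G u) = u"
    and inj_F: "inj_on F (ball 0 R)"
    and small: "\<And>x p. x \<in> ball 0 R \<Longrightarrow> p \<in> P \<Longrightarrow> norm (F x - x) \<le> norm (x - p) / 10"
    and fixed: "\<And>p. p \<in> P \<Longrightarrow> F p = p"
begin

lemma G_F:
  assumes "x \<in> ball 0 r" "F x \<in> ball 0 r"
  shows "G (F x) = x"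
proof (rule inj_onD[OF inj_F])
  show "F (G (F x)) = F x" "G (F x) \<in> ball 0 R" using F_G G_in_ball assms(2) by auto
  show "x \<in> ball 0 R" using assms(1) r_le_R by auto
qed

lemma G_avoids: "G \<in> ball 0 r - P \<rightarrow> - P"
proof
  fix u assume u: "u \<in> ball 0 r - P"
  show "G u \<in> - P"
  proof
    assume "G u \<in> P"
    then have "G u = u" using F_G[of u] fixed[of "G u"] u by simp
    with u \<open>G u \<in> P\<close> show False by simp
  qed
qed

lemma homotopic_paths_image_segment:
  assumes "a \<in> ball 0 r" "c \<in> ball 0 r" "d \<in> ball 0 r - P" "F c = a" "F d = c"
  shows "homotopic_paths (- P) (G \<circ> linepath a c) (linepath c d)"
proof (rule homotopic_paths_linear)
  have seg: "closed_segment a c \<subseteq> ball 0 r" using assms by (intro closed_segment_subset) auto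
  then show "path (G \<circ> linepath a c)"
    by (intro path_continuous_image continuous_on_subset[OF continuous_G]) auto
  have "G a = c" "G c = d" using G_F assms by auto
  then show "pathstart (linepath c d) = pathstart (G \<circ> linepath a c)"
    "pathfinish (linepath c d) = pathfinish (G \<circ> linepath a c)"
    by (simp_all add: pathstart_def pathfinish_def linepath_def)
  fix t :: real assume t: "t \<in> {0..1}"
  define u where "u = linepath a c t"
  have u: "u \<in> ball 0 r" using linepath_in_path[OF t] seg u_def by blast
  have "ball 0 r \<subseteq> ball (0::complex) R" using r_le_R by auto
  show "closed_segment ((G \<circ> linepath a c) t) (linepath c d t) \<subseteq> - P"
  proof
    fix p assume "p \<in> closed_segment ((G \<circ> linepath a c) t) (linepath c d t)"
    moreover have "p \<notin> closed_segment (G u) ((1 - t) *\<^sub>R c + t *\<^sub>R d)" if "p \<in> P"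
    proof (rule notin_closed_segment_small_displacement[where F = F and a = a])
      show "F (G u) = (1 - t) *\<^sub>R a + t *\<^sub>R c" using F_G[OF u] by (simp add: u_def linepath_def)
    qed (use assms t small[OF G_in_ball[OF u] that] small[of c p] small[of d p]
          \<open>ball 0 r \<subseteq> ball 0 R\<close> that in auto)
    ultimately show "p \<in> - P" by (auto simp: u_def linepath_def)
  qed
qed simp

lemma homotopic_paths_pullback_segment:
  assumes "a \<in> ball 0 r" "c \<in> ball 0 r - P" "d \<in> ball 0 r - P" "F c = a" "F d = c"
    and hom: "homotopic_paths (ball 0 r - P) \<gamma> (linepath a c)"
    and \<eta>: "path \<eta>" "path_image \<eta> \<subseteq> ball 0 r - P" "\<And>t. t \<in> {0..1} \<Longrightarrow> F (\<eta> t) = \<gamma> t"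
  shows "homotopic_paths (ball 0 r - P) \<eta> (linepath c d)"
proof -
  have "\<eta> t = G (\<gamma> t)" if "t \<in> {0..1}" for t
  proof -
    have "\<eta> t \<in> ball 0 r" "\<gamma> t \<in> ball 0 r"
      using \<eta>(2) homotopic_paths_imp_subset[OF hom] that by (auto simp: path_image_def image_subset_iff)
    then show ?thesis using G_F[of "\<eta> t"] \<eta>(3)[OF that] by simp
  qed
  then have "homotopic_paths (- P) \<eta> (G \<circ> \<gamma>)"
    using \<eta> by (intro homotopic_paths_eq) auto
  also have "homotopic_paths (- P) (G \<circ> \<gamma>) (G \<circ> linepath a c)"
    using homotopic_paths_continuous_image[OF hom continuous_on_subset[OF continuous_G] G_avoids]
    by auto
  also have "homotopic_paths (- P) (G \<circ> linepath a c) (linepath c d)"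
    using assms by (intro homotopic_paths_image_segment) auto
  finally have hom_cd: "homotopic_paths (- P) \<eta> (linepath c d)" .
  moreover have "path_image (linepath c d) \<subseteq> ball 0 r - P"
    using homotopic_paths_imp_subset[OF hom_cd] closed_segment_subset[of c "ball 0 r" d] assms
    by auto
  ultimately show ?thesis using homotopic_paths_in_ball_diff[OF compact_P P_subset] \<eta>(2) by blast
qed

lemma backward_orbit_homotopic_segments:
  assumes z: "\<And>j. enat j < k \<Longrightarrow> z j \<in> ball 0 r - P"
    and orbit: "\<And>j. enat (Suc j) < k \<Longrightarrow> F (z (Suc j)) = z j"
    and \<eta>: "\<And>j. enat (Suc j) < k \<Longrightarrow> path (\<eta> (Suc j)) \<and> path_image (\<eta> (Suc j)) \<subseteq> ball 0 r - P"
    and pullback: "\<And>j t. enat (Suc (Suc j)) < k \<Longrightarrow> t \<in> {0..1} \<Longrightarrow> F (\<eta> (Suc (Suc j)) t) = \<eta> (Suc j) t"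
    and first: "enat 1 < k \<Longrightarrow> homotopic_paths (ball 0 r - P) (\<eta> 1) (linepath (z 0) (z 1))"
    and "enat (Suc m) < k"
  shows "homotopic_paths (ball 0 r - P) (\<eta> (Suc m)) (linepath (z m) (z (Suc m)))"
  using \<open>enat (Suc m) < k\<close>
proof (induction m)
  case 0
  then show ?case using first by (simp add: one_enat_def)
next
  case (Suc m)
  then have "enat (Suc m) < k" "enat m < k"
    by (meson Suc_n_not_le_n enat_ord_simps(2) linorder_not_le order.strict_trans)+
  show ?case
  proof (rule homotopic_paths_pullback_segment[where a = "z m" and \<gamma> = "\<eta> (Suc m)"])
    show "z m \<in> ball 0 r" using z[OF \<open>enat m < k\<close>] by blast
    show "z (Suc m) \<in> ball 0 r - P" "z (Suc (Suc m)) \<in> ball 0 r - P"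
      using z \<open>enat (Suc m) < k\<close> Suc.prems by blast+
    show "F (z (Suc m)) = z m" "F (z (Suc (Suc m))) = z (Suc m)"
      using orbit \<open>enat (Suc m) < k\<close> Suc.prems by blast+
    show "homotopic_paths (ball 0 r - P) (\<eta> (Suc m)) (linepath (z m) (z (Suc m)))"
      using Suc.IH \<open>enat (Suc m) < k\<close> .
    show "path (\<eta> (Suc (Suc m)))" "path_image (\<eta> (Suc (Suc m))) \<subseteq> ball 0 r - P"
      using \<eta>[OF Suc.prems] by auto
    show "F (\<eta> (Suc (Suc m)) t) = \<eta> (Suc m) t" if "t \<in> {0..1}" for t
      using pullback[OF Suc.prems that] .
  qed
qed

lemma segment_homotopy_propagates: "segment_homotopy_propagates F (ball 0 r - P)"
  unfolding segment_homotopy_propagates_def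
proof (intro allI impI)
  fix k :: enat and z :: "nat \<Rightarrow> complex" and \<eta> :: "nat \<Rightarrow> real \<Rightarrow> complex" and j :: nat
  assume hyps: "\<forall>j. enat j < k \<longrightarrow> z j \<in> ball 0 r - P"
    "\<forall>j. 1 \<le> j \<and> enat j < k \<longrightarrow> F (z j) = z (j - 1)"
    "\<forall>j. 1 \<le> j \<and> enat j < k \<longrightarrow>
          path (\<eta> j) \<and> pathstart (\<eta> j) = z (j - 1) \<and> pathfinish (\<eta> j) = z j \<and>
          path_image (\<eta> j) \<subseteq> ball 0 r - P"
    "\<forall>j. 2 \<le> j \<and> enat j < k \<longrightarrow> (\<forall>t\<in>{0..1}. F (\<eta> j t) = \<eta> (j - 1) t)"
    "enat 1 < k \<longrightarrow> homotopic_paths (ball 0 r - P) (\<eta> 1) (linepath (z 0) (z 1))"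
    and j: "1 \<le> j \<and> enat j < k"
  then obtain m where "j = Suc m" "enat (Suc m) < k" by (cases j) auto
  moreover have "homotopic_paths (ball 0 r - P) (\<eta> (Suc m)) (linepath (z m) (z (Suc m)))"
  proof (rule backward_orbit_homotopic_segments[where k = k])
    show "z i \<in> ball 0 r - P" if "enat i < k" for i using hyps(1) that by blast
    show "F (z (Suc i)) = z i" if "enat (Suc i) < k" for i
      using hyps(2)[rule_format, of "Suc i"] that by simp
    show "path (\<eta> (Suc i)) \<and> path_image (\<eta> (Suc i)) \<subseteq> ball 0 r - P" if "enat (Suc i) < k" for i
      using hyps(3)[rule_format, of "Suc i"] that by simp
    show "F (\<eta> (Suc (Suc i)) t) = \<eta> (Suc i) t" if "enat (Suc (Suc i)) < k" "t \<in> {0..1}" for i t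
      using hyps(4)[rule_format, of "Suc (Suc i)"] that by simp
  qed (use hyps(5) \<open>enat (Suc m) < k\<close> in auto)
  ultimately show "homotopic_paths (ball 0 r - P) (\<eta> j) (linepath (z (j - 1)) (z j))" by simp
qed

end

lemma segment_homotopy_propagates_near_identity:
  fixes F :: "complex \<Rightarrow> complex"
  assumes hol: "F holomorphic_on ball 0 r0"
    and P: "finite P" "2 \<le> card P" "0 \<in> P" "P \<subseteq> ball 0 r"
    and fixed: "\<And>p. p \<in> P \<Longrightarrow> F p = p"
    and \<rho>: "0 < \<rho>" "\<rho> < r0" and R: "0 < R" "R \<le> \<rho> / 2" "20 * (M + 1) * R \<le> 1" and "0 \<le> M"
    and sphere: "\<And>w. w \<in> sphere 0 \<rho> \<Longrightarrow> norm (F w - w) \<le> M * (\<rho> / 2) ^ card P"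
    and r: "r \<le> R / 4"
  shows "segment_homotopy_propagates F (ball 0 r - P)"
proof -
  define h where "h = (\<lambda>x. F x - x)"
  have h_hol: "h holomorphic_on ball 0 r0" unfolding h_def by (intro holomorphic_intros hol)
  have "r \<le> R" using r R(1) by simp
  then have P_R: "P \<subseteq> ball 0 R" using P(4) by auto
  have "P \<subseteq> ball 0 (\<rho> / 2)" using P_R R(2) by auto
  then have bound: "norm (h x) \<le> M * (\<Prod>a\<in>P. norm (x - a))" if "x \<in> cball 0 (2 * R)" for x
    using holomorphic_norm_le_prod_dist_zeros[OF h_hol P(1) _ _ \<rho> \<open>0 \<le> M\<close>, of x]
      R(2) that fixed sphere by (auto simp: h_def)
  have small: "norm (F x - x) \<le> norm (x - p) / 10" if "x \<in> ball 0 R" "p \<in> P" for x p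
    using prod_bound_norm_le_dist[OF bound P(1,2) P_R \<open>0 \<le> M\<close> R(3) that] by (simp add: h_def)
  have "2 * R < r0" using R(2) \<rho>(2) by simp
  have "(1/2)-lipschitz_on (ball 0 R) h"
  proof (rule holomorphic_lipschitz_on_convex)
    show "h holomorphic_on ball 0 R"
      using holomorphic_on_subset[OF h_hol subset_ball] \<open>2 * R < r0\<close> R(1) by simp
    show "norm (deriv h z) \<le> 1/2" if "z \<in> ball 0 R" for z
      using prod_bound_norm_deriv_le[OF h_hol \<open>2 * R < r0\<close> bound P(2) P_R \<open>0 \<le> M\<close> R(3) that] .
  qed auto
  then have lip: "(1/2)-lipschitz_on (ball 0 R) (\<lambda>x. F x - x)" by (simp add: h_def)
  obtain G where "continuous_on (ball 0 r) G"
    "\<And>u. u \<in> ball 0 r \<Longrightarrow> G u \<in> ball 0 R" "\<And>u. u \<in> ball 0 r \<Longrightarrow> F (G u) = u"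
    using near_identity_local_inverse[OF R(1) fixed[OF P(3)] lip r] by blast
  then interpret inverse_branch F G P r R
    by (rule inverse_branch.intro[OF finite_imp_compact[OF P(1)] P(4) \<open>r \<le> R\<close> _ _ _
          near_identity_inj_on[OF lip] small fixed])
  show ?thesis by (rule segment_homotopy_propagates)
qed

lemma uniform_approx_fixed_points_in_ball:
  fixes f :: "'a::{real_normed_vector,heine_borel} \<Rightarrow> 'a"
  assumes f: "continuous_on (cball 0 r0) f" "\<And>z. z \<in> cball 0 r0 \<Longrightarrow> f z = z \<Longrightarrow> z = 0"
    and "0 < r"
  obtains \<epsilon> where "0 < \<epsilon>"
    "\<And>F z. z \<in> cball 0 r0 \<Longrightarrow> dist (F z) (f z) < \<epsilon> \<Longrightarrow> F z = z \<Longrightarrow> z \<in> ball 0 r"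
proof -
  define K where "K = cball (0::'a) r0 - ball 0 r"
  have "\<exists>\<epsilon>>0. \<forall>z\<in>K. \<epsilon> \<le> norm (f z - z)"
  proof (cases "K = {}")
    case False
    have "compact K" unfolding K_def by (intro compact_diff) auto
    moreover have "continuous_on K (\<lambda>z. norm (f z - z))"
      unfolding K_def by (intro continuous_intros continuous_on_subset[OF f(1)]) auto
    ultimately obtain z0 where "z0 \<in> K" "\<forall>z\<in>K. norm (f z0 - z0) \<le> norm (f z - z)"
      using continuous_attains_inf False by blast
    moreover have "f z0 \<noteq> z0" using f(2) \<open>z0 \<in> K\<close> \<open>0 < r\<close> by (force simp: K_def)
    ultimately show ?thesis by (intro exI[of _ "norm (f z0 - z0)"]) auto
  qed (auto intro!: exI[of _ 1])
  then obtain \<epsilon> where "0 < \<epsilon>" and \<epsilon>: "\<And>z. z \<in> K \<Longrightarrow> \<epsilon> \<le> norm (f z - z)" by blast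
  have "z \<in> ball 0 r" if "z \<in> cball 0 r0" "dist (F z) (f z) < \<epsilon>" "F z = z" for F z
    using \<epsilon>[of z] that by (force simp: K_def dist_norm norm_minus_commute)
  with \<open>0 < \<epsilon>\<close> show ?thesis using that by blast
qed

lemma eventually_segment_homotopy_propagates:
  fixes f :: "complex \<Rightarrow> complex" and F :: "nat \<Rightarrow> complex \<Rightarrow> complex"
    and P :: "nat \<Rightarrow> complex set"
  assumes "0 < r0" and f: "continuous_on (cball 0 r0) f" "\<And>z. z \<in> cball 0 r0 \<Longrightarrow> f z = z \<Longrightarrow> z = 0"
    and F_hol: "\<And>n. F n holomorphic_on ball 0 r0"
    and lim: "uniform_limit (cball 0 r0) F f sequentially"
    and P: "eventually (\<lambda>n. {z \<in> cball 0 r0. F n z = z} = P n \<and> 0 \<in> P n \<and> finite (P n) \<and>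
      card (P n) = N) sequentially" "2 \<le> N"
  obtains R where "0 < R"
    "\<And>r. 0 < r \<Longrightarrow> r \<le> R \<Longrightarrow>
      eventually (\<lambda>n. segment_homotopy_propagates (F n) (ball 0 r - P n)) sequentially"
proof -
  have "bounded ((\<lambda>x. f x - x) ` cball 0 r0)"
    by (intro compact_imp_bounded compact_continuous_image continuous_intros f(1)) auto
  then obtain B where "0 < B" and B: "\<And>x. x \<in> cball 0 r0 \<Longrightarrow> norm (f x - x) \<le> B"
    by (auto simp: bounded_pos)
  define \<rho> where "\<rho> = r0 / 2"
  have \<rho>: "0 < \<rho>" "\<rho> < r0" using \<open>0 < r0\<close> by (auto simp: \<rho>_def)
  define M where "M = (B + 1) / (\<rho> / 2) ^ N"
  have "0 \<le> M" and M: "M * (\<rho> / 2) ^ N = B + 1" using \<open>0 < B\<close> \<rho> by (auto simp: M_def)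
  define R where "R = min (\<rho> / 2) (1 / (20 * (M + 1)))"
  have R: "0 < R" "R \<le> \<rho> / 2" "20 * (M + 1) * R \<le> 1"
    using \<rho> \<open>0 \<le> M\<close> by (auto simp: R_def min_def field_simps)
  show ?thesis
  proof (rule that[of "R / 4"])
    fix r assume r: "0 < r" "r \<le> R / 4"
    obtain \<epsilon> where "0 < \<epsilon>" and \<epsilon>:
      "\<And>F z. z \<in> cball 0 r0 \<Longrightarrow> dist (F z) (f z) < \<epsilon> \<Longrightarrow> F z = z \<Longrightarrow> z \<in> ball 0 r"
      using uniform_approx_fixed_points_in_ball[OF f r(1)] by blast
    have "eventually (\<lambda>n. \<forall>x\<in>cball 0 r0. dist (F n x) (f x) < min 1 \<epsilon>) sequentially"
      by (rule uniform_limitD[OF lim]) (simp add: \<open>0 < \<epsilon>\<close>)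
    with P(1) show "eventually (\<lambda>n. segment_homotopy_propagates (F n) (ball 0 r - P n)) sequentially"
    proof eventually_elim
      case (elim n)
      then have close: "\<And>x. x \<in> cball 0 r0 \<Longrightarrow> dist (F n x) (f x) < min 1 \<epsilon>" by blast
      have P_r: "P n \<subseteq> ball 0 r" using elim \<epsilon> by fastforce
      have sphere: "norm (F n w - w) \<le> M * (\<rho> / 2) ^ card (P n)" if "w \<in> sphere 0 \<rho>" for w
      proof -
        have w: "w \<in> cball 0 r0" using that \<rho> by simp
        have "norm (F n w - w) \<le> dist (F n w) (f w) + norm (f w - w)"
          using norm_triangle_ineq[of "F n w - f w" "f w - w"] by (simp add: dist_norm)
        also have "\<dots> \<le> B + 1" using close[OF w] B[OF w] by linarith
        finally show ?thesis using M elim by simp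
      qed
      show ?case
      proof (rule segment_homotopy_propagates_near_identity[OF F_hol _ _ _ P_r _ \<rho> R \<open>0 \<le> M\<close> sphere r(2)])
        show "F n p = p" if "p \<in> P n" for p using elim that by blast
      qed (use elim P(2) in auto)
    qed
  qed (simp add: R)
qed

text \<open>Of the hypotheses only continuity of f and uniqueness of its fixed point, holomorphy of
  the f_n near the closed disc, uniform convergence and the description of the fixed points
  of f_n are needed; the remaining ones serve other parts of the paper.\<close>

theorem corollary4p4:
  fixes q :: nat and lam b :: complex and g :: "complex \<Rightarrow> complex"
    and gn :: "nat \<Rightarrow> complex \<Rightarrow> complex" and lamn :: "nat \<Rightarrow> complex"
    and Orb :: "nat \<Rightarrow> complex set" and r0 r1 :: real
  assumes q: "q \<ge> 1"
    and lam: "primitive_root_of_unity q lam"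
    and g_hol: "\<exists>\<epsilon>>0. g holomorphic_on ball 0 \<epsilon>"
    and g0: "g 0 = 0" and g'0: "deriv g 0 = lam"
    and f_exp: "(\<lambda>z. (g ^^ q) z - (z + z ^ (q + 1) + b * z ^ (2 * q + 1)))
                  \<in> O[at 0](\<lambda>z. z ^ (2 * q + 2))"
    and r0: "0 < r0" "r0 < 1"
    and f_univ: "\<exists>U. open U \<and> cball 0 r0 \<subseteq> U \<and> (g ^^ q) holomorphic_on U \<and> inj_on (g ^^ q) U"
    and f_fix: "\<forall>z\<in>cball 0 r0. (g ^^ q) z = z \<longrightarrow> z = 0"
    and f_deriv: "\<forall>z\<in>cball 0 r0. Re (deriv (g ^^ q) z) > 0"
    and gn_hol: "\<forall>n. \<exists>\<epsilon>>0. gn n holomorphic_on ball 0 \<epsilon>"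
    and gn0: "\<forall>n. gn n 0 = 0" and gn'0: "\<forall>n. deriv (gn n) 0 = lamn n"
    and lamn: "\<forall>n. norm (lamn n) \<noteq> 1"
    and fn_hol: "\<forall>n. \<exists>U. open U \<and> cball 0 r0 \<subseteq> U \<and> (gn n ^^ q) holomorphic_on U"
    and fn_lim: "uniform_limit (cball 0 r0) (\<lambda>n. gn n ^^ q) (g ^^ q) sequentially"
    and fn_fix: "eventually (\<lambda>n. {z \<in> cball 0 r0. (gn n ^^ q) z = z} = insert 0 (Orb n)
                                \<and> 0 \<notin> Orb n \<and> is_q_cycle (gn n) q (Orb n)) sequentially"
    and r1: "0 < r1" "r1 < r0 / 2"
    and r1_f: "(g ^^ q) ` cball 0 r1 \<subseteq> ball 0 r0"
    and r1_finv: "cball 0 r1 \<subseteq> (g ^^ q) ` ball 0 r0"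
    and r1_n: "eventually (\<lambda>n. \<forall>z\<in>cball 0 r1. norm ((gn n ^^ q) z - z) \<le> r1 / 2) sequentially"
  shows "\<exists>r2. 0 < r2 \<and> r2 < r1 \<and>
    (\<forall>r. 0 < r \<and> r < r2 \<longrightarrow>
      eventually (\<lambda>n.
        \<forall>(k :: enat) (z :: nat \<Rightarrow> complex) (\<eta> :: nat \<Rightarrow> real \<Rightarrow> complex).
          (\<forall>j. enat j < k \<longrightarrow> z j \<in> ball 0 r - insert 0 (Orb n)) \<longrightarrow>
          (\<forall>j. 1 \<le> j \<and> enat j < k \<longrightarrow> (gn n ^^ q) (z j) = z (j - 1)) \<longrightarrow>
          (\<forall>j. 1 \<le> j \<and> enat j < k \<longrightarrow>
              path (\<eta> j) \<and> pathstart (\<eta> j) = z (j - 1) \<and> pathfinish (\<eta> j) = z j \<and>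
              path_image (\<eta> j) \<subseteq> ball 0 r - insert 0 (Orb n)) \<longrightarrow>
          (\<forall>j. 2 \<le> j \<and> enat j < k \<longrightarrow> (\<forall>t\<in>{0..1}. (gn n ^^ q) (\<eta> j t) = \<eta> (j - 1) t)) \<longrightarrow>
          (enat 1 < k \<longrightarrow> homotopic_paths (ball 0 r - insert 0 (Orb n)) (\<eta> 1) (linepath (z 0) (z 1))) \<longrightarrow>
          (\<forall>j. 1 \<le> j \<and> enat j < k \<longrightarrow>
              homotopic_paths (ball 0 r - insert 0 (Orb n)) (\<eta> j) (linepath (z (j - 1)) (z j))))
      sequentially)"
proof -
  have f_cont: "continuous_on (cball 0 r0) (g ^^ q)"
    using f_univ holomorphic_on_imp_continuous_on holomorphic_on_subset by metis
  have fn_hol_ball: "(gn n ^^ q) holomorphic_on ball 0 r0" for n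
    using fn_hol holomorphic_on_subset ball_subset_cball by (metis order_trans)
  have fixed_points: "eventually (\<lambda>n. {z \<in> cball 0 r0. (gn n ^^ q) z = z} = insert 0 (Orb n) \<and>
      0 \<in> insert 0 (Orb n) \<and> finite (insert 0 (Orb n)) \<and> card (insert 0 (Orb n)) = q + 1) sequentially"
    using fn_fix
  proof eventually_elim
    case (elim n)
    then have "card (Orb n) = q" by (auto simp: is_q_cycle_def)
    then show ?case using elim q card_ge_0_finite[of "Orb n"] by auto
  qed
  have "2 \<le> q + 1" using q by simp
  then obtain R where "0 < R" and R: "\<And>r. 0 < r \<Longrightarrow> r \<le> R \<Longrightarrow> eventually (\<lambda>n.
      segment_homotopy_propagates (gn n ^^ q) (ball 0 r - insert 0 (Orb n))) sequentially"
    using eventually_segment_homotopy_propagates[OF r0(1) f_cont _ fn_hol_ball fn_lim fixed_points] f_fix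
    by blast
  then have "eventually (\<lambda>n. segment_homotopy_propagates (gn n ^^ q) (ball 0 r - insert 0 (Orb n)))
      sequentially" if "0 < r \<and> r < min R (r1 / 2)" for r
    using that by simp
  then show ?thesis
    unfolding segment_homotopy_propagates_def using \<open>0 < R\<close> r1
    by (intro exI[of _ "min R (r1 / 2)"]) auto
qed

end
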